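(* For complex parameters $a,c$, \begin{align*} \sum_{n=0}^\infty \sum_{j=-n}^n (-1)^{j}\bigl(1-q^{2n+1}\bigr) q^{j^2-n}\frac{(q/a, q/c; q)_n}{(q a, q c; q)_n}(ac)^n =\frac{(1-a)(q; q )_\infty}{(1-ac/q)(qc; q )_\infty}\sum_{n=0}^\infty \frac{(q/c, -a; q)_n (-c)^n}{\bigl(q^2; q^2\bigr)_n (a; q)_n} q^{n(n-1)/2}. \end{align*}
   Context: Throughout, $q$ is a complex number with $0<|q|<1$. For $x\in\mathbb{C}$ and base $p\in\{q,q^2\}$, $(x;p)_\infty=\prod_{k=0}^\infty(1-xp^k)$ and, for an integer $n\ge 0$, $(x;p)_n=\prod_{k=0}^{n-1}(1-xp^k)$; also $(x_1,\dots,x_m;p)_n=(x_1;p)_n\cdots(x_m;p)_n$ for $n$ an integer or $\infty$. *)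

theory Defs
  imports "HOL-Analysis.Analysis"
begin

definition qpoch :: "complex \<Rightarrow> complex \<Rightarrow> nat \<Rightarrow> complex" where
  "qpoch x p n = (\<Prod>k<n. 1 - x * p ^ k)"

definition qpoch_inf :: "complex \<Rightarrow> complex \<Rightarrow> complex" where
  "qpoch_inf x p = (\<Prod>k. 1 - x * p ^ k)"

end

theory Submission
  imports Defs
begin

text \<open>
  Put \<open>\<Theta>(n) = (\<Sum>\<bar>j\<bar>\<le>n. (-1)^j q^(j^2))\<close> and \<open>\<theta>(n) = \<Theta>(n) - \<Theta>(n - 1)\<close>, so that
  \<open>\<theta>(0) = 1\<close> and \<open>\<theta>(n) = 2 (-1)^n q^(n^2)\<close> for \<open>n > 0\<close>. The \<open>n\<close>-th term on the left is
  \<open>(G(n) - G(n + 1)) \<Theta>(n)\<close> for an explicit sequence \<open>G(n) \<longlonglongrightarrow> 0\<close>, so by Abel summation the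
  left side equals \<open>\<Sum>n. G(n) \<theta>(n)\<close>. Termwise, \<open>G(n) \<theta>(n)\<close> is the prefactor of the right side
  times \<open>\<alpha>(n) \<gamma>(n)\<close>, where \<open>(\<alpha>, \<beta>)\<close> is a Bailey pair relative to 1 with
  \<open>\<beta>(n) = (-a;q)_n / ((q^2;q^2)_n (a;q)_n)\<close> and \<open>(\<gamma>, \<delta>)\<close> is a conjugate Bailey pair with
  \<open>\<delta>(n) = q^(n(n-1)/2) (-c)^n (q/c;q)_n\<close>, its \<open>\<gamma>(n)\<close> being a limiting case of the
  \<open>q\<close>-Gauss sum. Bailey's transform \<open>\<Sum> \<alpha>(n) \<gamma>(n) = \<Sum> \<beta>(n) \<delta>(n)\<close>, an interchange of
  summation in an absolutely convergent double series, then gives the right side.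
\<close>

section \<open>\<open>q\<close>-Pochhammer symbols\<close>

lemma qpoch_0 [simp]: "qpoch x p 0 = 1"
  by (simp add: qpoch_def)

lemma qpoch_Suc: "qpoch x p (Suc n) = qpoch x p n * (1 - x * p ^ n)"
  by (simp add: qpoch_def)

lemma qpoch_add: "qpoch x p (m + n) = qpoch x p m * qpoch (x * p ^ m) p n"
  by (induction n) (simp_all add: qpoch_Suc power_add mult_ac)

lemma qpoch_Suc_left: "qpoch x p (Suc n) = (1 - x) * qpoch (x * p) p n"
  using qpoch_add[of x p 1 n] by (simp add: qpoch_def)

lemma one_minus_power_Suc_nonzero:
  fixes q :: complex
  assumes "norm q < 1"
  shows "1 - q ^ Suc k \<noteq> 0"
proof
  assume "1 - q ^ Suc k = 0"
  then have "norm q ^ Suc k = 1"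
    by (metis norm_one norm_power right_minus_eq)
  moreover have "norm q ^ Suc k < 1"
    using assms power_less_one_iff[of "norm q" "Suc k"] by simp
  ultimately show False
    by simp
qed

lemma qpoch_q_nonzero:
  fixes q :: complex
  assumes "norm q < 1"
  shows "qpoch q q n \<noteq> 0"
  using one_minus_power_Suc_nonzero[OF assms] by (simp add: qpoch_def flip: power_Suc)

lemma convergent_prod_qpoch:
  fixes q :: complex
  assumes "norm q < 1"
  shows "convergent_prod (\<lambda>k. 1 - x * q ^ k)"
proof -
  have "summable (\<lambda>k. norm ((1 - x * q ^ k) - 1))"
    using assms by (simp add: norm_mult norm_power summable_mult)
  then show ?thesis
    by (intro abs_convergent_prod_imp_convergent_prod summable_imp_abs_convergent_prod)
qed

lemma qpoch_LIMSEQ: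
  fixes q :: complex
  assumes "norm q < 1"
  shows "(\<lambda>n. qpoch x q n) \<longlonglongrightarrow> qpoch_inf x q"
proof -
  have "(\<lambda>n. \<Prod>k\<le>n. 1 - x * q ^ k) \<longlonglongrightarrow> qpoch_inf x q"
    using convergent_prod_LIMSEQ[OF convergent_prod_qpoch[OF assms]] by (simp add: qpoch_inf_def)
  then have "(\<lambda>n. qpoch x q (Suc n)) \<longlonglongrightarrow> qpoch_inf x q"
    by (simp add: qpoch_def lessThan_Suc_atMost)
  then show ?thesis
    by (rule LIMSEQ_imp_Suc)
qed

lemma qpoch_inf_eq_qpoch_mult:
  fixes q :: complex
  assumes "norm q < 1"
  shows "qpoch_inf x q = qpoch x q m * qpoch_inf (x * q ^ m) q"
proof -
  have "(\<lambda>n. qpoch x q (n + m)) \<longlonglongrightarrow> qpoch_inf x q"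
    using qpoch_LIMSEQ[OF assms] by (rule LIMSEQ_ignore_initial_segment)
  moreover have "(\<lambda>n. qpoch x q (n + m)) \<longlonglongrightarrow> qpoch x q m * qpoch_inf (x * q ^ m) q"
    unfolding add.commute[of _ m] qpoch_add by (intro tendsto_mult tendsto_const qpoch_LIMSEQ assms)
  ultimately show ?thesis
    by (rule LIMSEQ_unique)
qed

lemma qpoch_inf_nonzero:
  fixes q :: complex
  assumes "norm q < 1" and "\<And>n. qpoch x q n \<noteq> 0"
  shows "qpoch_inf x q \<noteq> 0"
proof -
  have "1 - x * q ^ k \<noteq> 0" for k
    using assms(2)[of "Suc k"] by (simp add: qpoch_Suc)
  with convergent_prod_qpoch[OF assms(1)] show ?thesis
    unfolding qpoch_inf_def by (rule prodinf_nonzero)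
qed

text \<open>\<open>qpoch_poly q x n\<close> equals \<open>(-x)^n (q/x; q)_n\<close>, but as a polynomial in \<open>x\<close> it needs no
  hypothesis \<open>x \<noteq> 0\<close>.\<close>
definition qpoch_poly :: "complex \<Rightarrow> complex \<Rightarrow> nat \<Rightarrow> complex" where
  "qpoch_poly q x n = (\<Prod>k<n. q ^ Suc k - x)"

lemma qpoch_poly_0 [simp]: "qpoch_poly q x 0 = 1"
  by (simp add: qpoch_poly_def)

lemma qpoch_poly_Suc: "qpoch_poly q x (Suc n) = qpoch_poly q x n * (q ^ Suc n - x)"
  by (simp add: qpoch_poly_def)

lemma qpoch_poly_eq:
  assumes "x \<noteq> 0"
  shows "qpoch_poly q x n = (- x) ^ n * qpoch (q / x) q n"
  by (induction n) (use assms in \<open>simp_all add: qpoch_poly_Suc qpoch_Suc field_simps\<close>)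

lemma qpoch_poly_add:
  assumes "q \<noteq> 0"
  shows "qpoch_poly q x (r + m) = qpoch_poly q x r * q ^ (r * m) * qpoch_poly q (x / q ^ r) m"
proof (induction m)
  case (Suc m)
  have "q ^ Suc (r + m) - x = q ^ r * (q ^ Suc m - x / q ^ r)"
    using assms by (simp add: field_simps power_add)
  then show ?case
    using Suc by (simp add: qpoch_poly_Suc power_add mult_ac)
qed simp

lemma norm_qpoch_poly_le:
  fixes q :: complex
  assumes "norm q \<le> 1"
  shows "norm (qpoch_poly q x n) \<le> (1 + norm x) ^ n"
proof -
  have "norm (q ^ Suc k - x) \<le> 1 + norm x" for k
  proof -
    have "norm (q ^ Suc k) \<le> 1"
      unfolding norm_power using assms by (rule power_le_one[OF norm_ge_zero])
    then show ?thesis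
      using norm_triangle_ineq4[of "q ^ Suc k" x] by linarith
  qed
  then have "(\<Prod>k<n. norm (q ^ Suc k - x)) \<le> (\<Prod>k<n. 1 + norm x)"
    by (intro prod_mono) simp
  then show ?thesis
    by (simp add: qpoch_poly_def prod_norm)
qed

definition inv_qfact :: "complex \<Rightarrow> nat \<Rightarrow> complex" where
  "inv_qfact q k = 1 / qpoch q q k"

lemma inv_qfact_0 [simp]: "inv_qfact q 0 = 1"
  by (simp add: inv_qfact_def)

lemma inv_qfact_Suc: "inv_qfact q (Suc k) = inv_qfact q k / (1 - q ^ Suc k)"
  by (simp add: inv_qfact_def qpoch_Suc mult.commute)

lemma inv_qfact_LIMSEQ:
  fixes q :: complex
  assumes "norm q < 1"
  shows "inv_qfact q \<longlonglongrightarrow> 1 / qpoch_inf q q"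
  unfolding inv_qfact_def
  by (intro tendsto_divide tendsto_const qpoch_LIMSEQ qpoch_inf_nonzero qpoch_q_nonzero assms)

lemma inv_qfact_bounded:
  fixes q :: complex
  assumes "norm q < 1"
  obtains B where "B > 0" "\<And>k. norm (inv_qfact q k) \<le> B"
  using convergent_imp_Bseq[OF convergentI[OF inv_qfact_LIMSEQ[OF assms]]] by (auto elim!: BseqE)

section \<open>Triangular numbers\<close>

fun tri :: "nat \<Rightarrow> nat" where
  "tri 0 = 0"
| "tri (Suc n) = tri n + n"

lemma tri_add: "tri (m + n) = tri m + tri n + m * n"
  by (induction n) simp_all

lemma tri_eq_div: "tri n = n * (n - 1) div 2"
proof (induction n)
  case (Suc n)
  have "Suc n * (Suc n - 1) = n * (n - 1) + 2 * n"
    by (cases n) (simp_all add: algebra_simps)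
  then show ?case
    using Suc by simp
qed simp

lemma double_tri_add_self: "2 * tri n + n = n ^ 2"
  by (induction n) (simp_all add: power2_eq_square algebra_simps)

lemma summable_Suc_mult_power_tri:
  fixes \<rho> L :: real
  assumes "0 \<le> \<rho>" "\<rho> < 1" "0 \<le> L"
  shows "summable (\<lambda>m. real (Suc m) * \<rho> ^ tri m * L ^ m)"
proof -
  have "(\<lambda>m. 2 * L * \<rho> ^ m) \<longlonglongrightarrow> 2 * L * 0"
    by (intro tendsto_mult tendsto_const LIMSEQ_power_zero) (use assms in auto)
  then have "eventually (\<lambda>m. 2 * L * \<rho> ^ m < 1/2) sequentially"
    by (intro order_tendstoD(2)) auto
  then obtain N where N: "\<And>m. m \<ge> N \<Longrightarrow> 2 * L * \<rho> ^ m < 1/2"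
    by (auto simp: eventually_sequentially)
  show ?thesis
  proof (rule summable_ratio_test[of "1/2" N])
    fix m assume m: "m \<ge> N"
    have "norm (real (Suc (Suc m)) * \<rho> ^ tri (Suc m) * L ^ Suc m)
        = real (Suc (Suc m)) * \<rho> ^ tri m * L ^ m * (\<rho> ^ m * L)"
      using assms by (simp add: power_add abs_mult)
    also have "\<dots> \<le> (2 * real (Suc m)) * \<rho> ^ tri m * L ^ m * (\<rho> ^ m * L)"
      using assms by (intro mult_right_mono mult_nonneg_nonneg) auto
    also have "\<dots> = real (Suc m) * \<rho> ^ tri m * L ^ m * (2 * L * \<rho> ^ m)" by simp
    also have "\<dots> \<le> real (Suc m) * \<rho> ^ tri m * L ^ m * (1/2)"
      using N[OF m] assms by (intro mult_left_mono) auto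
    also have "\<dots> = 1/2 * norm (real (Suc m) * \<rho> ^ tri m * L ^ m)"
      using assms by (simp add: abs_mult)
    finally show "norm (real (Suc (Suc m)) * \<rho> ^ tri (Suc m) * L ^ Suc m)
        \<le> 1/2 * norm (real (Suc m) * \<rho> ^ tri m * L ^ m)" .
  qed simp
qed

lemma summable_power_tri:
  fixes \<rho> L :: real
  assumes "0 \<le> \<rho>" "\<rho> < 1" "0 \<le> L"
  shows "summable (\<lambda>m. \<rho> ^ tri m * L ^ m)"
proof (rule summable_comparison_test[OF _ summable_Suc_mult_power_tri[OF assms]])
  show "\<exists>N. \<forall>n\<ge>N. norm (\<rho> ^ tri n * L ^ n) \<le> real (Suc n) * \<rho> ^ tri n * L ^ n"
  proof (intro exI allI impI)
    fix n :: nat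
    have "\<rho> ^ tri n * L ^ n \<le> real (Suc n) * (\<rho> ^ tri n * L ^ n)"
      using mult_right_mono[of 1 "real (Suc n)" "\<rho> ^ tri n * L ^ n"] assms by simp
    then show "norm (\<rho> ^ tri n * L ^ n) \<le> real (Suc n) * \<rho> ^ tri n * L ^ n"
      using assms by (simp add: abs_mult mult.assoc)
  qed
qed

section \<open>A Bailey pair\<close>

text \<open>\<open>(bailey_alpha, bailey_beta)\<close> is a Bailey pair relative to 1; for \<open>r > 0\<close>,
  \<open>bailey_alpha q a r = 2 q^(r(r-1)/2) a^r (q/a;q)_r / (a;q)_r\<close>.\<close>
definition alpha_term :: "complex \<Rightarrow> complex \<Rightarrow> nat \<Rightarrow> complex" where
  "alpha_term q a r = (-1) ^ r * q ^ tri r * qpoch_poly q a r / qpoch a q r"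

definition bailey_alpha :: "complex \<Rightarrow> complex \<Rightarrow> nat \<Rightarrow> complex" where
  "bailey_alpha q a r = (if r = 0 then 1 else 2) * alpha_term q a r"

definition bailey_summand :: "complex \<Rightarrow> complex \<Rightarrow> nat \<Rightarrow> nat \<Rightarrow> complex" where
  "bailey_summand q a n r = bailey_alpha q a r * inv_qfact q (n - r) * inv_qfact q (n + r)"

definition bailey_beta :: "complex \<Rightarrow> complex \<Rightarrow> nat \<Rightarrow> complex" where
  "bailey_beta q a n = (\<Sum>r\<le>n. bailey_summand q a n r)"

lemma alpha_term_Suc:
  assumes "qpoch a q (Suc r) \<noteq> 0"
  shows "alpha_term q a (Suc r) = alpha_term q a r * q ^ r * (a - q ^ Suc r) / (1 - a * q ^ r)"
  using assms by (simp add: alpha_term_def qpoch_Suc qpoch_poly_Suc field_simps power_add)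

text \<open>The recurrence \<open>bailey_beta_rec\<close> holds summand by summand up to a difference in \<open>r\<close> of this
  telescoper (a WZ-style certificate).\<close>
definition beta_telescoper :: "complex \<Rightarrow> complex \<Rightarrow> nat \<Rightarrow> nat \<Rightarrow> complex" where
  "beta_telescoper q a n r = (if r = 0 \<or> Suc n < r then 0 else
      -2 * q ^ (Suc n - r) * (1 - a * q ^ (r - 1)) * alpha_term q a r
        * inv_qfact q (Suc n - r) * inv_qfact q (n + r))"

context
  fixes q a :: complex
  assumes norm_q: "norm q < 1" and qpoch_a: "\<And>n. qpoch a q n \<noteq> 0"
begin

lemma one_minus_a_power_nonzero: "1 - a * q ^ k \<noteq> 0"
  using qpoch_a[of "Suc k"] by (simp add: qpoch_Suc)

lemma norm_alpha_term_le:
  obtains A where "A > 0" "\<And>r. norm (alpha_term q a r) \<le> A * (1 + norm a) ^ r"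
proof -
  have "(\<lambda>r. 1 / qpoch a q r) \<longlonglongrightarrow> 1 / qpoch_inf a q"
    by (intro tendsto_divide tendsto_const qpoch_LIMSEQ qpoch_inf_nonzero norm_q qpoch_a)
  from convergent_imp_Bseq[OF convergentI[OF this]]
  obtain A where A: "A > 0" "\<And>r. norm (1 / qpoch a q r) \<le> A"
    by (auto elim!: BseqE)
  have "norm (alpha_term q a r) \<le> A * (1 + norm a) ^ r" for r
  proof -
    have "norm (alpha_term q a r)
        = norm q ^ tri r * norm (qpoch_poly q a r) * norm (1 / qpoch a q r)"
      by (simp add: alpha_term_def norm_mult norm_power norm_divide)
    also have "\<dots> \<le> 1 * (1 + norm a) ^ r * A"
      using norm_q by (intro mult_mono power_le_one norm_qpoch_poly_le A(2)) auto
    finally show ?thesis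
      by (simp add: mult.commute)
  qed
  with A(1) show thesis
    by (rule that)
qed

lemma beta_telescoper_0:
  "(1 - q ^ (2 * n + 2)) * (1 - a * q ^ n) * bailey_summand q a (Suc n) 0
     - (1 + a * q ^ n) * bailey_summand q a n 0
   = beta_telescoper q a n 1 - beta_telescoper q a n 0"
proof -
  define x where "x = q ^ n"
  define R where "R = inv_qfact q n"
  have R_Suc: "inv_qfact q (Suc n) = R / (1 - q * x)"
    using inv_qfact_Suc[of q n] by (simp add: R_def x_def)
  have qx: "1 - q * x \<noteq> 0"
    using one_minus_power_Suc_nonzero[OF norm_q, of n] by (simp add: x_def)
  have a1: "1 - a \<noteq> 0"
    using one_minus_a_power_nonzero[of 0] by simp
  have alpha_1: "alpha_term q a (Suc 0) = (a - q) / (1 - a)"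
    by (simp add: alpha_term_def qpoch_poly_def qpoch_def)
  have q_power: "q ^ (2 * n + 2) = q\<^sup>2 * x\<^sup>2" "q ^ (2 * n) = x\<^sup>2"
    by (simp_all add: x_def power_add power_mult_distrib power_mult mult.commute power2_eq_square)
  have "(1 - q ^ (2 * n + 2)) * (1 - a * q ^ n) * bailey_summand q a (Suc n) 0
          - (1 + a * q ^ n) * bailey_summand q a n 0
      = (1 - q\<^sup>2 * x\<^sup>2) * (1 - a * x) * ((R / (1 - q * x)) * (R / (1 - q * x)))
          - (1 + a * x) * (R * R)"
    by (simp add: bailey_summand_def bailey_alpha_def alpha_term_def R_Suc q_power
        power2_eq_square flip: x_def R_def)
  also have "\<dots> = -2 * x * (a - q) * R * (R / (1 - q * x))"
    using qx by (simp add: divide_simps) algebra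
  also have "\<dots> = -2 * x * (1 - a) * ((a - q) / (1 - a)) * R * (R / (1 - q * x))"
    using a1 by simp
  also have "\<dots> = beta_telescoper q a n 1 - beta_telescoper q a n 0"
    by (simp add: beta_telescoper_def alpha_1 R_Suc flip: x_def R_def)
  finally show ?thesis .
qed

lemma beta_telescoper_last:
  "(1 - q ^ (2 * n + 2)) * (1 - a * q ^ n) * bailey_summand q a (Suc n) (Suc n)
   = beta_telescoper q a n (Suc (Suc n)) - beta_telescoper q a n (Suc n)"
proof -
  define Y where "Y = inv_qfact q (Suc (n + n))"
  define W where "W = alpha_term q a (Suc n)"
  define z where "z = q * (q * q ^ (2 * n))"
  have Y_Suc: "inv_qfact q (Suc (Suc (n + n))) = Y / (1 - z)"
    using inv_qfact_Suc[of q "Suc (n + n)"] by (simp add: Y_def z_def mult_2)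
  have "1 - z \<noteq> 0"
    using one_minus_power_Suc_nonzero[OF norm_q, of "Suc (2 * n)"] by (simp add: z_def)
  then have "(1 - z) * (1 - a * q ^ n) * (2 * W * (Y / (1 - z))) = 2 * (1 - a * q ^ n) * W * Y"
    by simp
  then show ?thesis
    by (simp add: bailey_summand_def bailey_alpha_def beta_telescoper_def Y_Suc
        flip: W_def z_def Y_def) (simp add: algebra_simps)
qed

lemma beta_telescoper_Suc:
  assumes "r < n"
  shows "(1 - q ^ (2 * n + 2)) * (1 - a * q ^ n) * bailey_summand q a (Suc n) (Suc r)
           - (1 + a * q ^ n) * bailey_summand q a n (Suc r)
         = beta_telescoper q a n (Suc (Suc r)) - beta_telescoper q a n (Suc r)"
proof -
  obtain p where n: "n = Suc (r + p)"
    using less_imp_Suc_add[OF assms] by blast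
  define u where "u = q ^ r"
  define v where "v = q ^ p"
  define X where "X = inv_qfact q p"
  define Y where "Y = inv_qfact q (n + Suc r)"
  define W where "W = alpha_term q a (Suc r)"
  have X_Suc: "inv_qfact q (Suc p) = X / (1 - q * v)"
    unfolding X_def v_def by (simp add: inv_qfact_Suc)
  have Y_Suc: "inv_qfact q (Suc (n + Suc r)) = Y / (1 - q ^ 3 * u\<^sup>2 * v)"
    unfolding Y_def inv_qfact_Suc n
    by (simp add: u_def v_def power_add power2_eq_square power3_eq_cube algebra_simps)
  have qv: "1 - q * v \<noteq> 0"
    using one_minus_power_Suc_nonzero[OF norm_q, of p] by (simp add: v_def)
  have quv: "1 - q ^ 3 * u\<^sup>2 * v \<noteq> 0"
    using one_minus_power_Suc_nonzero[OF norm_q, of "n + Suc r"] n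
    by (simp add: u_def v_def power_add power2_eq_square power3_eq_cube algebra_simps)
  have auq: "1 - a * (q * u) \<noteq> 0"
    using one_minus_a_power_nonzero[of "Suc r"] by (simp add: u_def)
  have W_Suc: "alpha_term q a (Suc (Suc r)) = W * (q * u) * (a - q\<^sup>2 * u) / (1 - a * (q * u))"
    using alpha_term_Suc[OF qpoch_a, of "Suc r"] by (simp add: W_def u_def power2_eq_square)
  have indices: "Suc n - Suc r = Suc p" "n - Suc r = p" "Suc n + Suc r = Suc (n + Suc r)"
    "Suc n - Suc (Suc r) = p" "n + Suc (Suc r) = Suc (n + Suc r)"
    using n by auto
  have q_n: "q ^ n = q * u * v"
    unfolding n u_def v_def by (simp add: power_add)
  then have q_power: "q ^ (2 * n + 2) = q ^ 4 * u\<^sup>2 * v\<^sup>2" "q ^ n = q * u * v"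
    "q ^ Suc p = q * v" "q ^ p = v" "q ^ Suc r = q * u" "q ^ r = u"
    by (simp_all add: u_def v_def power_add power_mult mult.commute[of 2] power_mult_distrib
        power2_eq_square power4_eq_xxxx)
  have cases: "(Suc r = 0 \<or> Suc n < Suc r) = False"
    "(Suc (Suc r) = 0 \<or> Suc n < Suc (Suc r)) = False" "(Suc r = 0) = False"
    "Suc (Suc r) - 1 = Suc r" "Suc r - 1 = r"
    using assms by auto
  show ?thesis
    using qv quv auq assms
    unfolding bailey_summand_def bailey_alpha_def beta_telescoper_def indices X_Suc Y_Suc W_Suc
      q_power cases if_False W_def[symmetric] X_def[symmetric] Y_def[symmetric]
    by (simp add: divide_simps)
      (simp add: algebra_simps power2_eq_square power3_eq_cube power4_eq_xxxx)
qed

lemma bailey_summand_diff: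
  assumes "r \<le> n"
  shows "(1 - q ^ (2 * n + 2)) * (1 - a * q ^ n) * bailey_summand q a (Suc n) r
           - (1 + a * q ^ n) * bailey_summand q a n r
         = beta_telescoper q a n (Suc r) - beta_telescoper q a n r"
proof (cases r)
  case 0
  then show ?thesis
    using beta_telescoper_0 by simp
next
  case (Suc r')
  then show ?thesis
    using assms beta_telescoper_Suc[of r' n] by simp
qed

lemma bailey_beta_rec:
  "(1 - q ^ (2 * n + 2)) * (1 - a * q ^ n) * bailey_beta q a (Suc n)
     = (1 + a * q ^ n) * bailey_beta q a n"
proof -
  let ?c = "(1 - q ^ (2 * n + 2)) * (1 - a * q ^ n)"
  let ?T = "beta_telescoper q a n"
  have "?c * bailey_beta q a (Suc n) - (1 + a * q ^ n) * bailey_beta q a n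
      = (\<Sum>r\<le>n. ?c * bailey_summand q a (Suc n) r - (1 + a * q ^ n) * bailey_summand q a n r)
        + ?c * bailey_summand q a (Suc n) (Suc n)"
    by (simp only: bailey_beta_def sum.atMost_Suc distrib_left sum_distrib_left sum_subtractf
        diff_add_eq)
  also have "\<dots> = (\<Sum>r<Suc n. ?T (Suc r) - ?T r) + (?T (Suc (Suc n)) - ?T (Suc n))"
    unfolding lessThan_Suc_atMost
    by (intro arg_cong2[where f = "(+)"] sum.cong refl bailey_summand_diff beta_telescoper_last)
      simp
  also have "\<dots> = 0"
    by (simp only: sum_lessThan_telescope) (simp add: beta_telescoper_def)
  finally show ?thesis
    by simp
qed

lemma bailey_beta_closed:
  "bailey_beta q a n = qpoch (- a) q n / (qpoch (q\<^sup>2) (q\<^sup>2) n * qpoch a q n)"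
proof (induction n)
  case 0
  then show ?case
    by (simp add: bailey_beta_def bailey_summand_def bailey_alpha_def alpha_term_def)
next
  case (Suc n)
  have q2n: "1 - q ^ (2 * n + 2) \<noteq> 0"
    using one_minus_power_Suc_nonzero[OF norm_q, of "Suc (2 * n)"] by simp
  have "norm (q\<^sup>2) < 1"
    using norm_q by (simp add: norm_power abs_square_less_1)
  then have "qpoch (q\<^sup>2) (q\<^sup>2) n \<noteq> 0"
    by (rule qpoch_q_nonzero)
  moreover have "q\<^sup>2 * (q\<^sup>2) ^ n = q ^ (2 * n + 2)"
    by (simp add: power_mult[symmetric] power_add[symmetric] mult.commute)
  moreover have "bailey_beta q a (Suc n)
      = (1 + a * q ^ n) * bailey_beta q a n / ((1 - q ^ (2 * n + 2)) * (1 - a * q ^ n))"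
    using q2n one_minus_a_power_nonzero[of n]
    by (subst nonzero_eq_divide_eq) (use bailey_beta_rec[of n] in \<open>simp_all add: mult.commute\<close>)
  ultimately show ?case
    using Suc.IH q2n one_minus_a_power_nonzero[of n] qpoch_a[of n]
    by (simp add: qpoch_Suc field_simps)
qed

end

section \<open>A limiting \<open>q\<close>-Gauss sum\<close>

text \<open>In standard notation,
  \<open>\<Sum>m. q^(m(m-1)/2) (q/d;q)_m (-d q^s)^m / ((q;q)_m (q;q)_(m+s)) = (d q^s;q)_\<infinity> / (q;q)_\<infinity>\<close>.
  The recurrence in \<open>s\<close> reduces it to the limit \<open>s \<rightarrow> \<infinity>\<close>, where only the term \<open>m = 0\<close> survives.\<close>
definition gauss_term :: "complex \<Rightarrow> complex \<Rightarrow> nat \<Rightarrow> nat \<Rightarrow> complex" where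
  "gauss_term q d s m =
     q ^ tri m * q ^ (s * m) * qpoch_poly q d m * inv_qfact q m * inv_qfact q (s + m)"

definition gauss_sum :: "complex \<Rightarrow> complex \<Rightarrow> nat \<Rightarrow> complex" where
  "gauss_sum q d s = (\<Sum>m. gauss_term q d s m)"

context
  fixes q d :: complex
  assumes norm_q: "norm q < 1"
begin

lemma norm_gauss_term_le:
  assumes "\<And>k. norm (inv_qfact q k) \<le> B"
  shows "norm (gauss_term q d s m) \<le> B\<^sup>2 * (norm q ^ tri m * (1 + norm d) ^ m)"
proof -
  have "B \<ge> 0"
    using assms[of 0] norm_ge_zero order_trans by blast
  moreover have "norm q ^ (s * m) \<le> 1"
    using norm_q by (simp add: power_le_one)
  ultimately have "norm (gauss_term q d s m)
      \<le> norm q ^ tri m * 1 * (1 + norm d) ^ m * B * B"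
    unfolding gauss_term_def norm_mult norm_power
    by (intro mult_mono norm_qpoch_poly_le assms) (use norm_q in auto)
  then show ?thesis
    by (simp add: power2_eq_square mult_ac)
qed

lemma summable_gauss_term: "summable (gauss_term q d s)"
proof -
  obtain B where B: "\<And>k. norm (inv_qfact q k) \<le> B"
    using inv_qfact_bounded[OF norm_q] by blast
  have "summable (\<lambda>m. B\<^sup>2 * (norm q ^ tri m * (1 + norm d) ^ m))"
    by (intro summable_mult summable_power_tri) (use norm_q in auto)
  then show ?thesis
    by (rule summable_comparison_test[rotated]) (use norm_gauss_term_le[OF B] in blast)
qed

lemma gauss_term_contiguous:
  "gauss_term q d s m - (1 - d * q ^ s) * gauss_term q d (Suc s) m
     = (1 - q ^ m) * gauss_term q d s m - (1 - q ^ Suc m) * gauss_term q d s (Suc m)"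
proof -
  define x where "x = q ^ m"
  define y where "y = q ^ s"
  define h where "h = gauss_term q d s m"
  have qxy: "1 - q * x * y \<noteq> 0"
    using one_minus_power_Suc_nonzero[OF norm_q, of "s + m"]
    by (simp add: x_def y_def power_add mult_ac)
  have qx: "1 - q * x \<noteq> 0"
    using one_minus_power_Suc_nonzero[OF norm_q, of m] by (simp add: x_def)
  have inv_Suc: "inv_qfact q (Suc (s + m)) = inv_qfact q (s + m) / (1 - q * x * y)"
    "inv_qfact q (Suc m) = inv_qfact q m / (1 - q * x)"
    using inv_qfact_Suc[of q "s + m"] inv_qfact_Suc[of q m]
    by (simp_all add: x_def y_def power_add mult_ac)
  have "gauss_term q d (Suc s) m = h * x / (1 - q * x * y)"
    unfolding h_def gauss_term_def using inv_Suc by (simp add: x_def power_add mult_ac)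
  moreover have "gauss_term q d s (Suc m)
      = h * x * y * (q * x - d) / ((1 - q * x) * (1 - q * x * y))"
    unfolding h_def gauss_term_def using inv_Suc
    by (simp add: x_def y_def qpoch_poly_Suc power_add mult_ac add.commute[of s m] flip: add_Suc)
  ultimately show ?thesis
    unfolding h_def[symmetric] x_def[symmetric] y_def[symmetric] power_Suc
    using qxy qx by (simp add: divide_simps) algebra
qed

lemma gauss_sum_rec: "gauss_sum q d s = (1 - d * q ^ s) * gauss_sum q d (Suc s)"
proof -
  let ?g = "\<lambda>m. (1 - q ^ m) * gauss_term q d s m"
  have "gauss_term q d s \<longlonglongrightarrow> 0"
    by (rule summable_LIMSEQ_zero[OF summable_gauss_term])
  then have "?g \<longlonglongrightarrow> (1 - 0) * 0"
    by (intro tendsto_mult tendsto_diff tendsto_const LIMSEQ_power_zero) (use norm_q in auto)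
  then have "(\<lambda>m. ?g m - ?g (Suc m)) sums (?g 0 - 0)"
    by (intro telescope_sums') simp
  then have "(\<lambda>m. gauss_term q d s m - (1 - d * q ^ s) * gauss_term q d (Suc s) m) sums 0"
    by (simp add: gauss_term_contiguous)
  moreover have "(\<lambda>m. gauss_term q d s m - (1 - d * q ^ s) * gauss_term q d (Suc s) m)
      sums (gauss_sum q d s - (1 - d * q ^ s) * gauss_sum q d (Suc s))"
    unfolding gauss_sum_def by (intro sums_diff summable_sums sums_mult summable_gauss_term)
  ultimately show ?thesis
    using sums_unique2 by fastforce
qed

lemma gauss_sum_eq_qpoch_mult: "gauss_sum q d s = qpoch (d * q ^ s) q N * gauss_sum q d (s + N)"
proof (induction N)
  case (Suc N)
  then show ?case
    using gauss_sum_rec[of "s + N"] by (simp add: qpoch_Suc power_add mult_ac)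
qed simp

lemma gauss_term_LIMSEQ:
  "(\<lambda>s. gauss_term q d s m) \<longlonglongrightarrow> (if m = 0 then 1 / qpoch_inf q q else 0)"
proof (cases "m = 0")
  case True
  then show ?thesis
    by (simp add: gauss_term_def inv_qfact_LIMSEQ[OF norm_q])
next
  case False
  have "norm (q ^ m) < 1"
    unfolding norm_power using norm_q False by (subst power_less_one_iff) auto
  then have "(\<lambda>s. q ^ tri m * (q ^ m) ^ s * qpoch_poly q d m * inv_qfact q m * inv_qfact q (s + m))
      \<longlonglongrightarrow> q ^ tri m * 0 * qpoch_poly q d m * inv_qfact q m * (1 / qpoch_inf q q)"
    by (intro tendsto_intros LIMSEQ_power_zero LIMSEQ_ignore_initial_segment inv_qfact_LIMSEQ
        norm_q)
  then show ?thesis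
    using False by (simp add: gauss_term_def power_mult mult.commute[of _ m] add.commute[of _ m])
qed

lemma gauss_sum_LIMSEQ: "gauss_sum q d \<longlonglongrightarrow> 1 / qpoch_inf q q"
proof -
  obtain B where B: "\<And>k. norm (inv_qfact q k) \<le> B"
    using inv_qfact_bounded[OF norm_q] by blast
  have "summable (\<lambda>m. B\<^sup>2 * (norm q ^ tri m * (1 + norm d) ^ m))"
    by (intro summable_mult summable_power_tri) (use norm_q in auto)
  then have "gauss_sum q d \<longlonglongrightarrow> (\<Sum>m. if m = 0 then 1 / qpoch_inf q q else 0)"
    unfolding gauss_sum_def
    by (intro tannerys_theorem[THEN conjunct2, THEN conjunct2] gauss_term_LIMSEQ
        always_eventually) (auto intro: norm_gauss_term_le B)
  moreover have "(\<lambda>m. if m = 0 then 1 / qpoch_inf q q else 0) sums (1 / qpoch_inf q q)"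
    by (rule sums_single)
  ultimately show ?thesis
    by (simp add: sums_iff)
qed

lemma gauss_sum_closed: "gauss_sum q d s = qpoch_inf (d * q ^ s) q / qpoch_inf q q"
proof -
  have "(\<lambda>N. qpoch (d * q ^ s) q N * gauss_sum q d (s + N))
      \<longlonglongrightarrow> qpoch_inf (d * q ^ s) q * (1 / qpoch_inf q q)"
    using LIMSEQ_ignore_initial_segment[OF gauss_sum_LIMSEQ, of s]
    by (intro tendsto_mult qpoch_LIMSEQ norm_q) (simp add: add.commute)
  then show ?thesis
    unfolding gauss_sum_eq_qpoch_mult[symmetric] by (simp add: LIMSEQ_const_iff)
qed

end

section \<open>Bailey's transform\<close>

text \<open>\<open>(bailey_gamma, bailey_delta)\<close> is a conjugate Bailey pair relative to 1.\<close>
definition bailey_delta :: "complex \<Rightarrow> complex \<Rightarrow> nat \<Rightarrow> complex" where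
  "bailey_delta q c n = q ^ tri n * qpoch_poly q c n"

definition bailey_gamma :: "complex \<Rightarrow> complex \<Rightarrow> nat \<Rightarrow> complex" where
  "bailey_gamma q c r =
     (\<Sum>m. bailey_delta q c (m + r) * inv_qfact q m * inv_qfact q (m + 2 * r))"

lemma norm_bailey_delta_le:
  fixes q :: complex
  assumes "norm q \<le> 1"
  shows "norm (bailey_delta q c n) \<le> norm q ^ tri n * (1 + norm c) ^ n"
  unfolding bailey_delta_def norm_mult norm_power
  by (intro mult_left_mono norm_qpoch_poly_le assms) simp

context
  fixes q c :: complex
  assumes q_nonzero: "q \<noteq> 0" and norm_q: "norm q < 1"
begin

lemma bailey_delta_shift:
  "bailey_delta q c (m + r) * inv_qfact q m * inv_qfact q (m + 2 * r)
     = bailey_delta q c r * gauss_term q (c / q ^ r) (2 * r) m"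
proof -
  have "qpoch_poly q c (m + r) = qpoch_poly q c r * q ^ (r * m) * qpoch_poly q (c / q ^ r) m"
    using qpoch_poly_add[OF q_nonzero, of c r m] by (simp add: add.commute)
  moreover have "q ^ (tri m + tri r + m * r) = q ^ tri m * q ^ tri r * q ^ (r * m)"
    by (simp add: power_add mult.commute)
  moreover have "q ^ (2 * r * m) = q ^ (r * m) * q ^ (r * m)"
    by (simp add: power_add[symmetric] mult_2 add_mult_distrib)
  ultimately show ?thesis
    unfolding bailey_delta_def gauss_term_def tri_add by (simp add: add.commute mult_ac)
qed

lemma summable_bailey_gamma:
  "summable (\<lambda>m. bailey_delta q c (m + r) * inv_qfact q m * inv_qfact q (m + 2 * r))"
  unfolding bailey_delta_shift by (intro summable_mult summable_gauss_term norm_q)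

lemma bailey_gamma_closed:
  "bailey_gamma q c r = bailey_delta q c r * qpoch_inf (c * q ^ r) q / qpoch_inf q q"
proof -
  have "bailey_gamma q c r = bailey_delta q c r * gauss_sum q (c / q ^ r) (2 * r)"
    unfolding bailey_gamma_def bailey_delta_shift gauss_sum_def
    by (rule suminf_mult[OF summable_gauss_term[OF norm_q]])
  also have "\<dots> = bailey_delta q c r * qpoch_inf (c * q ^ r) q / qpoch_inf q q"
    using q_nonzero
    by (simp add: gauss_sum_closed[OF norm_q] power_mult[symmetric] mult_2 power_add)
  finally show ?thesis .
qed

end

lemma abs_summable_double_series_sums:
  fixes f :: "nat \<Rightarrow> nat \<Rightarrow> 'a :: banach"
  assumes "(\<lambda>(n, r). norm (f n r)) summable_on UNIV"
    and rows: "\<And>n. (f n has_sum g n) UNIV"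
    and columns: "\<And>r. ((\<lambda>n. f n r) has_sum h r) UNIV"
  obtains S where "g sums S" and "h sums S"
proof -
  define S where "S = infsum (\<lambda>(n, r). f n r) UNIV"
  have sum: "((\<lambda>(n, r). f n r) has_sum S) (UNIV \<times> UNIV)"
    unfolding S_def using abs_summable_summable[of "\<lambda>(n, r). f n r"] assms(1)
    by (simp add: case_prod_beta')
  then have "(g has_sum S) UNIV"
    by (rule has_sum_SigmaD) (simp add: rows)
  moreover have "(h has_sum S) UNIV"
  proof -
    have "((\<lambda>(r, n). f n r) has_sum S) (UNIV \<times> UNIV)"
      using sum by (subst has_sum_swap) simp
    then show ?thesis
      by (rule has_sum_SigmaD) (simp add: columns)
  qed
  ultimately show thesis
    using that has_sum_imp_sums by blast
qed

definition bailey_array :: "complex \<Rightarrow> complex \<Rightarrow> complex \<Rightarrow> nat \<Rightarrow> nat \<Rightarrow> complex" where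
  "bailey_array q a c n r = (if r \<le> n then bailey_summand q a n r * bailey_delta q c n else 0)"

context
  fixes q a c :: complex
  assumes q_nonzero: "q \<noteq> 0" and norm_q: "norm q < 1" and qpoch_a: "\<And>n. qpoch a q n \<noteq> 0"
begin

lemma norm_bailey_array_le:
  obtains C L where "C \<ge> 0" "L \<ge> 0"
    "\<And>n r. norm (bailey_array q a c n r) \<le> C * (norm q ^ tri n * L ^ n)"
proof -
  obtain B where B: "B > 0" "\<And>k. norm (inv_qfact q k) \<le> B"
    using inv_qfact_bounded[OF norm_q] by blast
  obtain A where A: "A > 0" "\<And>r. norm (alpha_term q a r) \<le> A * (1 + norm a) ^ r"
    using norm_alpha_term_le[OF norm_q qpoch_a] by blast
  define L where "L = (1 + norm a) * (1 + norm c)"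
  define C where "C = 2 * A * B\<^sup>2"
  have "norm (bailey_array q a c n r) \<le> C * (norm q ^ tri n * L ^ n)" for n r
  proof (cases "r \<le> n")
    case True
    have "norm (bailey_alpha q a r) \<le> 2 * norm (alpha_term q a r)"
      by (simp add: bailey_alpha_def norm_mult)
    also have "\<dots> \<le> 2 * (A * (1 + norm a) ^ n)"
      using A True order.trans[OF A(2) mult_left_mono[OF power_increasing]] by simp
    finally have "norm (bailey_alpha q a r) * norm (inv_qfact q (n - r))
          * norm (inv_qfact q (n + r)) * norm (bailey_delta q c n)
        \<le> 2 * (A * (1 + norm a) ^ n) * B * B * (norm q ^ tri n * (1 + norm c) ^ n)"
      using A B norm_q by (intro mult_mono norm_bailey_delta_le) auto
    then show ?thesis
      using True by (simp add: bailey_array_def bailey_summand_def norm_mult C_def L_def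
          power_mult_distrib power2_eq_square mult_ac)
  qed (use A B in \<open>simp add: bailey_array_def C_def L_def\<close>)
  moreover have "C \<ge> 0" "L \<ge> 0"
    using A B by (simp_all add: C_def L_def)
  ultimately show thesis
    using that by blast
qed

lemma bailey_array_abs_summable: "(\<lambda>(n, r). norm (bailey_array q a c n r)) summable_on UNIV"
proof -
  obtain C L where CL: "C \<ge> 0" "L \<ge> 0"
    "\<And>n r. norm (bailey_array q a c n r) \<le> C * (norm q ^ tri n * L ^ n)"
    using norm_bailey_array_le by blast
  have row_support: "bailey_array q a c n r = 0" if "r \<notin> {..n}" for n r
    using that by (simp add: bailey_array_def)
  have rows: "(\<lambda>r. norm (bailey_array q a c n r)) summable_on UNIV" for n
    by (subst summable_on_cong_neutral[where T = "{..n}"]) (auto simp: row_support)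
  have row_sums: "infsum (\<lambda>r. norm (bailey_array q a c n r)) UNIV
      = (\<Sum>r\<le>n. norm (bailey_array q a c n r))" for n
    by (subst infsum_cong_neutral[where T = "{..n}"]) (auto simp: row_support)
  have "summable (\<lambda>n. C * (real (Suc n) * norm q ^ tri n * L ^ n))"
    by (intro summable_mult summable_Suc_mult_power_tri) (use norm_q CL in auto)
  then have "summable (\<lambda>n. \<Sum>r\<le>n. norm (bailey_array q a c n r))"
  proof (rule summable_comparison_test[rotated], intro exI allI impI)
    fix n :: nat
    have "(\<Sum>r\<le>n. norm (bailey_array q a c n r)) \<le> (\<Sum>r\<le>n. C * (norm q ^ tri n * L ^ n))"
      by (intro sum_mono CL(3))
    then show "norm (\<Sum>r\<le>n. norm (bailey_array q a c n r))
        \<le> C * (real (Suc n) * norm q ^ tri n * L ^ n)"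
      by (simp add: sum_nonneg mult_ac)
  qed
  then have "(\<lambda>n. norm (infsum (\<lambda>r. norm (bailey_array q a c n r)) UNIV)) summable_on UNIV"
    unfolding row_sums
    by (subst summable_on_UNIV_nonneg_real_iff) (simp_all add: sum_nonneg)
  with rows have "(\<lambda>x. norm ((\<lambda>(n, r). bailey_array q a c n r) x)) summable_on UNIV \<times> UNIV"
    by (intro iffD2[OF Infinite_Sum.abs_summable_on_Sigma_iff]) auto
  then show ?thesis
    by (simp add: case_prod_unfold)
qed

lemma bailey_array_row_has_sum:
  "(bailey_array q a c n has_sum bailey_beta q a n * bailey_delta q c n) UNIV"
proof -
  have "(bailey_array q a c n has_sum (\<Sum>r\<le>n. bailey_array q a c n r)) {..n}"
    by simp
  then show ?thesis
    by (subst has_sum_cong_neutral[where T = "{..n}"])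
      (auto simp: bailey_array_def bailey_beta_def sum_distrib_right)
qed

lemma bailey_array_column_has_sum:
  "((\<lambda>n. bailey_array q a c n r) has_sum bailey_alpha q a r * bailey_gamma q c r) UNIV"
proof -
  have abs_summable: "summable (\<lambda>n. norm (bailey_array q a c n r))"
  proof -
    obtain C L where CL: "C \<ge> 0" "L \<ge> 0"
      "\<And>n r. norm (bailey_array q a c n r) \<le> C * (norm q ^ tri n * L ^ n)"
      using norm_bailey_array_le by blast
    have "summable (\<lambda>n. C * (norm q ^ tri n * L ^ n))"
      by (intro summable_mult summable_power_tri) (use norm_q CL in auto)
    then show ?thesis
      by (rule summable_comparison_test[rotated]) (use CL in auto)
  qed
  have "(\<lambda>m. bailey_alpha q a r
            * (bailey_delta q c (m + r) * inv_qfact q m * inv_qfact q (m + 2 * r)))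
          sums (bailey_alpha q a r * bailey_gamma q c r)"
    unfolding bailey_gamma_def
    by (intro sums_mult summable_sums summable_bailey_gamma q_nonzero norm_q)
  then have "(\<lambda>m. bailey_array q a c (m + r) r) sums (bailey_alpha q a r * bailey_gamma q c r)"
    by (simp add: bailey_array_def bailey_summand_def add.assoc mult_ac flip: mult_2)
  moreover have "(\<Sum>n<r. bailey_array q a c n r) = 0"
    by (simp add: bailey_array_def)
  ultimately have "(\<lambda>n. bailey_array q a c n r) sums (bailey_alpha q a r * bailey_gamma q c r)"
    using sums_iff_shift[of "\<lambda>n. bailey_array q a c n r" r] by simp
  then show ?thesis
    by (rule norm_summable_imp_has_sum[OF abs_summable])
qed

lemma bailey_transform:
  obtains S where "(\<lambda>r. bailey_alpha q a r * bailey_gamma q c r) sums S"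
    and "(\<lambda>n. bailey_beta q a n * bailey_delta q c n) sums S"
proof -
  obtain S where "(\<lambda>n. bailey_beta q a n * bailey_delta q c n) sums S"
    and "(\<lambda>r. bailey_alpha q a r * bailey_gamma q c r) sums S"
    by (rule abs_summable_double_series_sums[OF bailey_array_abs_summable
          bailey_array_row_has_sum bailey_array_column_has_sum])
  then show thesis
    using that by blast
qed

end

section \<open>Abel summation against partial theta sums\<close>

lemma summation_by_parts_sums:
  fixes G d :: "nat \<Rightarrow> 'a :: real_normed_field"
  assumes "G \<longlonglongrightarrow> 0" and "(\<lambda>n. G n * d n) sums S" and "\<And>N. norm (\<Sum>k\<le>N. d k) \<le> B"
  shows "(\<lambda>n. (G n - G (Suc n)) * (\<Sum>k\<le>n. d k)) sums S"
proof -
  define D where "D N = (\<Sum>k\<le>N. d k)" for N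
  have partial_sums: "(\<Sum>n<N. (G n - G (Suc n)) * D n) = (\<Sum>n<Suc N. G n * d n) - G N * D N" for N
    by (induction N) (simp_all add: D_def algebra_simps)
  have "(\<lambda>N. \<Sum>n<Suc N. G n * d n) \<longlonglongrightarrow> S"
    using assms(2) unfolding sums_def by (rule LIMSEQ_Suc)
  moreover have "(\<lambda>N. G N * D N) \<longlonglongrightarrow> 0"
  proof (rule Lim_null_comparison)
    show "\<forall>\<^sub>F N in sequentially. norm (G N * D N) \<le> norm (G N) * B"
      using assms(3) by (simp add: D_def norm_mult mult_left_mono)
    show "(\<lambda>N. norm (G N) * B) \<longlonglongrightarrow> 0"
      using tendsto_mult_left_zero[OF tendsto_norm_zero[OF assms(1)]] .
  qed
  ultimately have "(\<lambda>N. (\<Sum>n<Suc N. G n * d n) - G N * D N) \<longlonglongrightarrow> S - 0"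
    by (rule tendsto_diff)
  then show ?thesis
    unfolding sums_def partial_sums[unfolded D_def] D_def by simp
qed

definition theta_partial :: "complex \<Rightarrow> nat \<Rightarrow> complex" where
  "theta_partial q n = (\<Sum>j\<in>{-int n..int n}. (-1) powi j * q powi (j\<^sup>2))"

definition theta_coeff :: "complex \<Rightarrow> nat \<Rightarrow> complex" where
  "theta_coeff q n = (if n = 0 then 1 else 2 * (-1) ^ n * q ^ (n\<^sup>2))"

lemma theta_partial_Suc: "theta_partial q (Suc n) = theta_partial q n + theta_coeff q (Suc n)"
proof -
  have interval: "{-int (Suc n)..int (Suc n)}
      = insert (- int (Suc n)) (insert (int (Suc n)) {-int n..int n})"
    by auto
  have positive: "(-1) powi int (Suc n) * q powi (int (Suc n))\<^sup>2 = (-1) ^ Suc n * q ^ (Suc n)\<^sup>2"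
    by (metis of_nat_power power_int_of_nat)
  have negative:
    "(-1) powi (- int (Suc n)) * q powi (- int (Suc n))\<^sup>2 = (-1) ^ Suc n * q ^ (Suc n)\<^sup>2"
  proof -
    have "(-1) powi (- int (Suc n)) = inverse ((-1) ^ Suc n :: complex)"
      by (simp only: power_int_minus power_int_of_nat)
    also have "\<dots> = (-1) ^ Suc n"
      by (simp flip: power_inverse)
    finally show ?thesis
      unfolding power2_minus positive[symmetric] by (simp only: power_int_of_nat)
  qed
  have "theta_partial q (Suc n)
      = (-1) powi (- int (Suc n)) * q powi (- int (Suc n))\<^sup>2
        + ((-1) powi int (Suc n) * q powi (int (Suc n))\<^sup>2 + theta_partial q n)"
    unfolding theta_partial_def interval
    by (subst sum.insert, simp, simp, subst sum.insert, simp, simp, rule refl)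
  also have "\<dots> = theta_partial q n + theta_coeff q (Suc n)"
    unfolding positive negative theta_coeff_def by simp
  finally show ?thesis .
qed

lemma theta_partial_eq_sum: "theta_partial q n = (\<Sum>k\<le>n. theta_coeff q k)"
  by (induction n) (simp_all add: theta_partial_Suc, simp add: theta_partial_def theta_coeff_def)

lemma norm_theta_coeff_le:
  fixes q :: complex
  assumes "norm q \<le> 1"
  shows "norm (theta_coeff q n) \<le> 2 * norm q ^ n"
proof -
  have "norm q ^ n\<^sup>2 \<le> norm q ^ n"
    using assms by (intro power_decreasing) (auto simp: power2_eq_square)
  then show ?thesis
    by (auto simp: theta_coeff_def norm_mult norm_power)
qed

lemma norm_theta_partial_le:
  fixes q :: complex
  assumes "norm q < 1"
  shows "norm (\<Sum>k\<le>n. theta_coeff q k) \<le> 2 / (1 - norm q)"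
proof -
  have "norm (\<Sum>k\<le>n. theta_coeff q k) \<le> (\<Sum>k\<le>n. 2 * norm q ^ k)"
    using assms norm_theta_coeff_le[of q] by (intro order.trans[OF norm_sum sum_mono]) simp
  also have "\<dots> \<le> (\<Sum>k. 2 * norm q ^ k)"
    by (intro sum_le_suminf summable_mult summable_geometric) (use assms in auto)
  also have "\<dots> = 2 / (1 - norm q)"
    using suminf_mult[OF summable_geometric[of "norm q"]] suminf_geometric[of "norm q"] assms
    by simp
  finally show ?thesis .
qed

locale bailey_setting =
  fixes q a c :: complex
  assumes q_nonzero: "q \<noteq> 0" and norm_q: "norm q < 1"
    and a_nonzero: "a \<noteq> 0" and c_nonzero: "c \<noteq> 0"
    and norm_ac: "norm (a * c) < norm q" and ac_neq_q: "a * c \<noteq> q"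
    and qpoch_qa: "\<And>n. qpoch (q * a) q n \<noteq> 0"
    and qpoch_qc: "\<And>n. qpoch (q * c) q n \<noteq> 0"
    and qpoch_a: "\<And>n. qpoch a q n \<noteq> 0"
begin

definition lhs_ratio :: "nat \<Rightarrow> complex" where
  "lhs_ratio n = (qpoch (q / a) q n * qpoch (q / c) q n)
     / (qpoch (q * a) q n * qpoch (q * c) q n) * (a * c) ^ n"

definition abel_weight :: "nat \<Rightarrow> complex" where
  "abel_weight n =
     (1 - a * q ^ n) * (1 - c * q ^ n) * inverse (q ^ n) * lhs_ratio n / (1 - a * c / q)"

lemma one_minus_ac_div_q_nonzero: "1 - a * c / q \<noteq> 0"
  using ac_neq_q q_nonzero by (simp add: field_simps)

lemma lhs_ratio_telescopes:
  "(1 - q ^ (2 * n + 1)) * inverse (q ^ n) * lhs_ratio n = abel_weight n - abel_weight (Suc n)"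
proof -
  define x where "x = q ^ n"
  have x: "x \<noteq> 0"
    using q_nonzero by (simp add: x_def)
  have qax: "1 - q * a * x \<noteq> 0" and qcx: "1 - q * c * x \<noteq> 0"
    using qpoch_qa[of "Suc n"] qpoch_qc[of "Suc n"] by (simp_all add: qpoch_Suc x_def)
  have ratio_Suc: "lhs_ratio (Suc n) = lhs_ratio n * (1 - q / a * x) * (1 - q / c * x) * (a * c)
      / ((1 - q * a * x) * (1 - q * c * x))"
    using qpoch_qa[of n] qpoch_qc[of n] qax qcx
    by (simp add: lhs_ratio_def qpoch_Suc x_def field_simps)
  have x_squared: "q ^ (2 * n) = x\<^sup>2"
    by (simp add: x_def power_mult[symmetric] mult.commute)
  show ?thesis
    unfolding abel_weight_def ratio_Suc x_def[symmetric] power_Suc power_add x_squared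
    using x qax qcx one_minus_ac_div_q_nonzero a_nonzero c_nonzero q_nonzero
    by (simp add: divide_simps) algebra
qed

lemma lhs_summand_eq:
  "(\<Sum>j\<in>{-int n..int n}. (-1) powi j * (1 - q ^ (2 * n + 1))
            * q powi (j ^ 2 - int n)
            * (qpoch (q / a) q n * qpoch (q / c) q n)
              / (qpoch (q * a) q n * qpoch (q * c) q n) * (a * c) ^ n)
     = (abel_weight n - abel_weight (Suc n)) * (\<Sum>k\<le>n. theta_coeff q k)"
  (is "?lhs = _")
proof -
  have "q powi (j ^ 2 - int n) = q powi (j ^ 2) * inverse (q ^ n)" for j
    using q_nonzero by (simp add: power_int_diff divide_inverse)
  then have "?lhs = (1 - q ^ (2 * n + 1)) * inverse (q ^ n) * lhs_ratio n * theta_partial q n"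
    by (simp add: theta_partial_def lhs_ratio_def sum_distrib_left sum_divide_distrib mult_ac)
  then show ?thesis
    unfolding lhs_ratio_telescopes theta_partial_eq_sum .
qed

lemma abel_weight_LIMSEQ: "abel_weight \<longlonglongrightarrow> 0"
proof -
  define F where "F N = (1 - a * q ^ N) * (1 - c * q ^ N)
     * (qpoch (q / a) q N * qpoch (q / c) q N) / (qpoch (q * a) q N * qpoch (q * c) q N)
     / (1 - a * c / q)" for N
  have "(a * c / q) ^ N = (a * c) ^ N * inverse (q ^ N)" for N
    unfolding power_divide by (rule divide_inverse)
  then have "abel_weight = (\<lambda>N. F N * (a * c / q) ^ N)"
    by (simp add: fun_eq_iff abel_weight_def F_def lhs_ratio_def divide_inverse mult_ac)
  moreover have "F \<longlonglongrightarrow> (1 - a * 0) * (1 - c * 0)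
     * (qpoch_inf (q / a) q * qpoch_inf (q / c) q) / (qpoch_inf (q * a) q * qpoch_inf (q * c) q)
     / (1 - a * c / q)"
    unfolding F_def
    using qpoch_inf_nonzero[OF norm_q qpoch_qa] qpoch_inf_nonzero[OF norm_q qpoch_qc]
      one_minus_ac_div_q_nonzero
    by (intro tendsto_intros qpoch_LIMSEQ norm_q LIMSEQ_power_zero) auto
  moreover have "(\<lambda>N. (a * c / q) ^ N) \<longlonglongrightarrow> 0"
    using norm_ac q_nonzero by (intro LIMSEQ_power_zero) (simp add: norm_divide)
  ultimately show ?thesis
    using tendsto_mult by fastforce
qed

lemma abel_weight_theta_coeff_cleared_Suc:
  "abel_weight (Suc m) * theta_coeff q (Suc m) * ((1 - a * c / q) * qpoch_inf (q * c) q)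
     = (1 - a) * bailey_alpha q a (Suc m) * bailey_delta q c (Suc m) * qpoch_inf (c * q ^ Suc m) q"
proof -
  define n where "n = Suc m"
  define x where "x = q ^ n"
  define t where "t = q ^ tri n"
  define D where "D = 1 - a * c / q"
  define A where "A = qpoch (q * a) q m"
  define C where "C = qpoch (q * c) q m"
  define PA where "PA = qpoch (q / a) q n"
  define PC where "PC = qpoch (q / c) q n"
  define I where "I = qpoch_inf (c * x) q"
  have nonzero: "x \<noteq> 0" "A \<noteq> 0" "C \<noteq> 0" "1 - a \<noteq> 0" "D \<noteq> 0"
    using q_nonzero qpoch_qa qpoch_qc one_minus_a_power_nonzero[OF norm_q qpoch_a, of 0]
      one_minus_ac_div_q_nonzero
    by (simp_all add: x_def A_def C_def D_def)
  have ax: "1 - a * x \<noteq> 0" and cx: "1 - c * x \<noteq> 0"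
    using qpoch_qa[of n] qpoch_qc[of n] by (simp_all add: n_def qpoch_Suc x_def mult_ac)
  have "qpoch (q * a) q n = A * (1 - a * x)" "qpoch (q * c) q n = C * (1 - c * x)"
    by (simp_all add: n_def A_def C_def x_def qpoch_Suc mult_ac)
  then have ratio: "lhs_ratio n = PA * PC / (A * (1 - a * x) * (C * (1 - c * x))) * (a * c) ^ n"
    by (simp add: lhs_ratio_def PA_def PC_def)
  have "qpoch a q n = (1 - a) * A"
    by (simp add: n_def A_def qpoch_Suc_left mult.commute)
  moreover have "(-1) ^ n * (- a) ^ n = a ^ n"
    by (simp flip: power_mult_distrib)
  ultimately have alpha: "bailey_alpha q a n = 2 * (t * (a ^ n * PA) / ((1 - a) * A))"
    by (simp add: n_def bailey_alpha_def alpha_term_def qpoch_poly_eq[OF a_nonzero] t_def PA_def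
        mult.assoc del: power_Suc)
  have delta: "bailey_delta q c n = t * ((- c) ^ n * PC)"
    by (simp add: bailey_delta_def qpoch_poly_eq[OF c_nonzero] t_def PC_def)
  have qc_inf: "qpoch_inf (q * c) q = C * I"
    using qpoch_inf_eq_qpoch_mult[OF norm_q, of "q * c" m]
    by (simp add: n_def C_def I_def x_def mult_ac)
  have "q ^ n\<^sup>2 = t * t * x"
    unfolding t_def x_def double_tri_add_self[symmetric] by (simp add: power_add mult_2)
  then have theta: "theta_coeff q n = 2 * (-1) ^ n * (t * t * x)"
    by (simp add: n_def theta_coeff_def)
  show ?thesis
    unfolding n_def[symmetric] abel_weight_def ratio alpha delta theta qc_inf x_def[symmetric]
      D_def[symmetric] I_def[symmetric]
    using nonzero ax cx by (simp add: divide_simps power_minus[of c])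
qed

lemma abel_weight_theta_coeff_cleared:
  "abel_weight n * theta_coeff q n * ((1 - a * c / q) * qpoch_inf (q * c) q)
     = (1 - a) * bailey_alpha q a n * bailey_delta q c n * qpoch_inf (c * q ^ n) q"
proof (cases n)
  case 0
  have "qpoch_inf c q = (1 - c) * qpoch_inf (q * c) q"
    using qpoch_inf_eq_qpoch_mult[OF norm_q, of c 1] by (simp add: qpoch_def mult.commute)
  then show ?thesis
    using 0 one_minus_ac_div_q_nonzero ac_neq_q
    by (simp add: abel_weight_def lhs_ratio_def theta_coeff_def bailey_alpha_def alpha_term_def
        bailey_delta_def)
next
  case (Suc m)
  then show ?thesis
    by (simp only: abel_weight_theta_coeff_cleared_Suc)
qed

lemma abel_weight_theta_coeff:
  "abel_weight n * theta_coeff q n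
     = (1 - a) * qpoch_inf q q / ((1 - a * c / q) * qpoch_inf (q * c) q)
       * (bailey_alpha q a n * bailey_gamma q c n)"
proof -
  define D where "D = (1 - a * c / q) * qpoch_inf (q * c) q"
  have D: "D \<noteq> 0"
    using qpoch_inf_nonzero[OF norm_q qpoch_qc] one_minus_ac_div_q_nonzero by (simp add: D_def)
  have cleared: "abel_weight n * theta_coeff q n * D
      = (1 - a) * bailey_alpha q a n * bailey_delta q c n * qpoch_inf (c * q ^ n) q"
    unfolding D_def by (rule abel_weight_theta_coeff_cleared)
  have "qpoch_inf q q \<noteq> 0"
    using qpoch_inf_nonzero[OF norm_q qpoch_q_nonzero[OF norm_q]] .
  then have "(1 - a) * qpoch_inf q q / D * (bailey_alpha q a n * bailey_gamma q c n)
      = (1 - a) * bailey_alpha q a n * bailey_delta q c n * qpoch_inf (c * q ^ n) q / D"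
    by (simp add: bailey_gamma_closed[OF q_nonzero norm_q])
  also have "\<dots> = abel_weight n * theta_coeff q n"
    unfolding cleared[symmetric] using D by simp
  finally show ?thesis
    by (simp add: D_def)
qed

lemma rhs_summand_eq:
  "(qpoch (q / c) q n * qpoch (- a) q n * (- c) ^ n) / (qpoch (q ^ 2) (q ^ 2) n * qpoch a q n)
     * q ^ (n * (n - 1) div 2) = bailey_beta q a n * bailey_delta q c n"
  by (simp add: bailey_beta_closed[OF norm_q qpoch_a] bailey_delta_def qpoch_poly_eq[OF c_nonzero]
      tri_eq_div)

end

theorem theorem6p3:
  fixes q a c :: complex
  assumes "0 < cmod q" and "cmod q < 1" and "a \<noteq> 0" and "c \<noteq> 0"
    and "cmod (a * c) < cmod q"
    and "\<And>n. qpoch (q * a) q n \<noteq> 0"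
    and "\<And>n. qpoch (q * c) q n \<noteq> 0"
    and "\<And>n. qpoch a q n \<noteq> 0"
    and "a * c \<noteq> q"
    and "qpoch_inf (q * c) q \<noteq> 0"
  shows "(\<Sum>n. \<Sum>j\<in>{-int n..int n}. (-1) powi j * (1 - q ^ (2 * n + 1))
            * q powi (j ^ 2 - int n)
            * (qpoch (q / a) q n * qpoch (q / c) q n)
              / (qpoch (q * a) q n * qpoch (q * c) q n) * (a * c) ^ n)
       = (1 - a) * qpoch_inf q q / ((1 - a * c / q) * qpoch_inf (q * c) q)
         * (\<Sum>n. (qpoch (q / c) q n * qpoch (- a) q n * (- c) ^ n)
                 / (qpoch (q ^ 2) (q ^ 2) n * qpoch a q n)
                 * q ^ (n * (n - 1) div 2))"
proof -
  interpret bailey_setting q a c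
    using assms by unfold_locales auto
  obtain S where alpha_gamma: "(\<lambda>r. bailey_alpha q a r * bailey_gamma q c r) sums S"
    and beta_delta: "(\<lambda>n. bailey_beta q a n * bailey_delta q c n) sums S"
    by (rule bailey_transform[OF q_nonzero norm_q qpoch_a])
  have "(\<lambda>n. abel_weight n * theta_coeff q n)
      sums ((1 - a) * qpoch_inf q q / ((1 - a * c / q) * qpoch_inf (q * c) q) * S)"
    unfolding abel_weight_theta_coeff by (rule sums_mult[OF alpha_gamma])
  then have "(\<lambda>n. (abel_weight n - abel_weight (Suc n)) * (\<Sum>k\<le>n. theta_coeff q k))
      sums ((1 - a) * qpoch_inf q q / ((1 - a * c / q) * qpoch_inf (q * c) q) * S)"
    by (rule summation_by_parts_sums[OF abel_weight_LIMSEQ _ norm_theta_partial_le[OF norm_q]])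
  then show ?thesis
    unfolding lhs_summand_eq rhs_summand_eq using beta_delta by (simp add: sums_iff)
qed

end
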